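(* For every finite permutation group $G$, $\mathrm{RC}(G)\le \mathrm{H}(G)+1$.
   Context: Let $G$ act on a finite set $\Omega$. A subset $\Lambda\subseteq\Omega$ is independent if its pointwise stabilizer $G_{(\Lambda)}$ differs from $G_{(\Lambda')}$ for every proper subset $\Lambda'\subsetneq\Lambda$; $\mathrm{H}(G)$ is the maximum size of an independent set. For $r\le n$ and $I,J\in\Omega^n$, write $I\sim_r J$ if for every choice of indices $k_1,\dots,k_r\in\{1,\dots,n\}$ there is $h\in G$ with $I_{k_i}^h=J_{k_i}$ for $i=1,\dots,r$. $\mathrm{RC}(G)$ is the least $r$ such that for all $n\ge r$ and all $I,J\in\Omega^n$, $I\sim_r J$ implies $I\sim_n J$. *)

theory Defs
  imports "HOL-Algebra.Bij"
begin

text \<open>A permutation group on the finite set Omega is a subgroup G of BijGroup Omega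
  (bijections of Omega, extensional outside Omega); g acts on points by application.\<close>

definition pw_stab :: "('a \<Rightarrow> 'a) set \<Rightarrow> 'a set \<Rightarrow> ('a \<Rightarrow> 'a) set" where
  "pw_stab G L = {g \<in> G. \<forall>x\<in>L. g x = x}"

definition independent :: "'a set \<Rightarrow> ('a \<Rightarrow> 'a) set \<Rightarrow> 'a set \<Rightarrow> bool" where
  "independent Omega G L \<longleftrightarrow> L \<subseteq> Omega \<and> (\<forall>L'. L' \<subset> L \<longrightarrow> pw_stab G L' \<noteq> pw_stab G L)"

definition height :: "'a set \<Rightarrow> ('a \<Rightarrow> 'a) set \<Rightarrow> nat" where
  "height Omega G = Max {card L | L. independent Omega G L}"

text \<open>Tuples in Omega^n are lists of length n with entries in Omega; indices are 0-based.
  rel_equiv G r I J: for every choice of r indices k_1..k_r (repetitions allowed)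
  some h in G maps I_(k_i) to J_(k_i) for all i.\<close>

definition rel_equiv :: "('a \<Rightarrow> 'a) set \<Rightarrow> nat \<Rightarrow> 'a list \<Rightarrow> 'a list \<Rightarrow> bool" where
  "rel_equiv G r I J \<longleftrightarrow>
     (\<forall>ks. length ks = r \<and> (\<forall>i<r. ks ! i < length I) \<longrightarrow>
        (\<exists>h\<in>G. \<forall>i<r. h (I ! (ks ! i)) = J ! (ks ! i)))"

definition rc :: "'a set \<Rightarrow> ('a \<Rightarrow> 'a) set \<Rightarrow> nat" where
  "rc Omega G = (LEAST r. \<forall>n\<ge>r. \<forall>I J. length I = n \<and> length J = n \<and>
       set I \<subseteq> Omega \<and> set J \<subseteq> Omega \<longrightarrow> rel_equiv G r I J \<longrightarrow> rel_equiv G n I J)"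

end

theory Submission
  imports Defs
begin

text \<open>Let \<open>B\<close> be a minimal subset of the entries of \<open>I\<close> with the same pointwise stabiliser as
  all of them; minimality makes \<open>B\<close> independent, so it has at most \<open>H(G)\<close> points.
  If \<open>I \<sim>\<^sub>r J\<close> with \<open>r = H(G) + 1\<close>, then for every index \<open>k\<close> some \<open>h\<^sub>k \<in> G\<close> maps the
  entries of \<open>I\<close> in \<open>B\<close> and the entry \<open>I\<^sub>k\<close> correctly. Any two of these agree on \<open>B\<close>, so
  \<open>h\<^sub>0\<^sup>-\<^sup>1 h\<^sub>k\<close> fixes \<open>B\<close> and hence every entry of \<open>I\<close>; thus a single \<open>h\<^sub>0\<close> maps all of \<open>I\<close>
  to \<open>J\<close>.\<close>

lemma rel_equiv_imp_agree_on:
  assumes "rel_equiv G r I J" "finite S" "S \<noteq> {}" "card S \<le> r" "\<forall>j\<in>S. j < length I"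
  shows "\<exists>h\<in>G. \<forall>j\<in>S. h (I ! j) = J ! j"
proof -
  obtain k where "k \<in> S" using assms(3) by blast
  define ks where "ks = sorted_list_of_set S @ replicate (r - card S) k"
  have len_ks: "length ks = r" using assms(2,4) by (simp add: ks_def)
  have set_ks: "set ks = S" using \<open>k \<in> S\<close> assms(2) by (auto simp: ks_def)
  then have "\<forall>i<r. ks ! i < length I" using assms(5) len_ks nth_mem by blast
  then obtain h where "h \<in> G" and h: "\<forall>i<r. h (I ! (ks ! i)) = J ! (ks ! i)"
    using assms(1) len_ks unfolding rel_equiv_def by blast
  have "h (I ! j) = J ! j" if "j \<in> S" for j
    using that h len_ks set_ks by (metis in_set_conv_nth)
  then show ?thesis using \<open>h \<in> G\<close> by blast
qed

lemma rel_equiv_if_maps_tuple: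
  assumes "h \<in> G" "\<forall>k<length I. h (I ! k) = J ! k"
  shows "rel_equiv G n I J"
  using assms unfolding rel_equiv_def by blast

lemma ex_independent_subset_same_pw_stab:
  assumes "finite A" "A \<subseteq> Omega"
  shows "\<exists>B\<subseteq>A. independent Omega G B \<and> pw_stab G B = pw_stab G A"
proof -
  let ?S = "{B. B \<subseteq> A \<and> pw_stab G B = pw_stab G A}"
  obtain B where B: "B \<in> ?S" and min: "\<And>C. C \<in> ?S \<Longrightarrow> card B \<le> card C"
    using ex_has_least_nat[of "\<lambda>B. B \<in> ?S" A card] by blast
  have "pw_stab G C \<noteq> pw_stab G B" if "C \<subset> B" for C
  proof
    assume "pw_stab G C = pw_stab G B"
    then have "card B \<le> card C" using min B that by auto
    moreover have "card C < card B"
      using that B assms(1) finite_subset psubset_card_mono by blast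
    ultimately show False by simp
  qed
  then show ?thesis using B assms(2) unfolding independent_def by blast
qed

lemma independent_card_le_height:
  assumes "finite Omega" "independent Omega G L"
  shows "card L \<le> height Omega G"
proof -
  have "{card L | L. independent Omega G L} \<subseteq> card ` Pow Omega"
    by (auto simp: independent_def)
  then have "finite {card L | L. independent Omega G L}"
    using assms(1) finite_subset by blast
  then show ?thesis unfolding height_def using assms(2) by (auto intro: Max_ge)
qed

lemma BijGroup_mult_apply:
  assumes "f \<in> Bij S" "g \<in> Bij S" "x \<in> S"
  shows "(f \<otimes>\<^bsub>BijGroup S\<^esub> g) x = f (g x)"
  using assms by (simp add: BijGroup_def compose_def)

lemma agree_on_fixed_point_of_pw_stab:
  assumes "subgroup G (BijGroup Omega)" "g \<in> G" "h \<in> G" "B \<subseteq> Omega"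
    and agree: "\<forall>b\<in>B. g b = h b"
    and "x \<in> Omega" and fixed: "\<forall>f\<in>pw_stab G B. f x = x"
  shows "g x = h x"
proof -
  have Bij: "g \<in> Bij Omega" "h \<in> Bij Omega"
    using assms(1-3) subgroup.subset by (force simp: BijGroup_def)+
  then have h_closed: "h y \<in> Omega" if "y \<in> Omega" for y
    using that Bij_imp_funcset by blast
  then have inv_mult_apply: "(inv\<^bsub>BijGroup Omega\<^esub> g \<otimes>\<^bsub>BijGroup Omega\<^esub> h) y = inv_into Omega g (h y)"
    if "y \<in> Omega" for y
    using that Bij by (simp add: inv_BijGroup BijGroup_mult_apply restrict_inv_into_Bij)
  have bij_g: "bij_betw g Omega Omega" using Bij by (simp add: Bij_def)
  have "inv\<^bsub>BijGroup Omega\<^esub> g \<otimes>\<^bsub>BijGroup Omega\<^esub> h \<in> pw_stab G B"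
    unfolding pw_stab_def
  proof (intro CollectI conjI ballI)
    show "inv\<^bsub>BijGroup Omega\<^esub> g \<otimes>\<^bsub>BijGroup Omega\<^esub> h \<in> G"
      using assms(1-3) subgroup.m_closed subgroup.m_inv_closed by metis
    fix b assume "b \<in> B"
    then show "(inv\<^bsub>BijGroup Omega\<^esub> g \<otimes>\<^bsub>BijGroup Omega\<^esub> h) b = b"
      using inv_mult_apply agree assms(4) bij_g bij_betw_inv_into_left by (metis subsetD)
  qed
  then have "inv_into Omega g (h x) = x" using fixed inv_mult_apply assms(6) by metis
  then show ?thesis
    using h_closed assms(6) bij_g bij_betw_inv_into_right by metis
qed

lemma maps_tuple_if_rel_equiv_over_stab_base:
  assumes "subgroup G (BijGroup Omega)" "set I \<subseteq> Omega"
    and "B \<subseteq> set I" "pw_stab G B = pw_stab G (set I)" "card B < r"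
    and "rel_equiv G r I J"
  shows "\<exists>h\<in>G. \<forall>k<length I. h (I ! k) = J ! k"
proof (cases "I = []")
  case True
  then show ?thesis using subgroup.one_closed[OF assms(1)] by auto
next
  case False
  have "\<forall>b\<in>B. \<exists>j<length I. I ! j = b" using assms(3) by (auto simp: in_set_conv_nth)
  then obtain idx where idx: "\<And>b. b \<in> B \<Longrightarrow> idx b < length I \<and> I ! idx b = b"
    by metis
  define K where "K = idx ` B"
  have "finite K" "card K \<le> card B"
    using finite_subset[OF assms(3)] by (auto simp: K_def card_image_le)
  have agree_on: "\<exists>h\<in>G. \<forall>j\<in>insert k K. h (I ! j) = J ! j" if "k < length I" for k
  proof (rule rel_equiv_imp_agree_on[OF assms(6)])
    have "card (insert k K) \<le> Suc (card K)" by (simp add: card_insert_if \<open>finite K\<close>)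
    then show "card (insert k K) \<le> r" using \<open>card K \<le> card B\<close> assms(5) by linarith
    show "\<forall>j\<in>insert k K. j < length I" using that idx by (auto simp: K_def)
  qed (use \<open>finite K\<close> in auto)
  obtain h0 where "h0 \<in> G" and h0: "\<forall>j\<in>insert 0 K. h0 (I ! j) = J ! j"
    using agree_on False by blast
  have "h0 (I ! k) = J ! k" if k: "k < length I" for k
  proof -
    obtain h where "h \<in> G" and h: "\<forall>j\<in>insert k K. h (I ! j) = J ! j"
      using agree_on[OF k] by blast
    have "\<forall>b\<in>B. h0 b = h b" using h0 h idx by (force simp: K_def)
    moreover have "\<forall>f\<in>pw_stab G B. f (I ! k) = I ! k"
      using assms(4) k by (simp add: pw_stab_def)
    moreover have "B \<subseteq> Omega" "I ! k \<in> Omega" using assms(2,3) k nth_mem by auto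
    ultimately have "h0 (I ! k) = h (I ! k)"
      using agree_on_fixed_point_of_pw_stab[OF assms(1) \<open>h0 \<in> G\<close> \<open>h \<in> G\<close>] by blast
    then show ?thesis using h by simp
  qed
  then show ?thesis using \<open>h0 \<in> G\<close> by blast
qed

theorem lemma2p1:
  fixes Omega :: "'a set" and G :: "('a \<Rightarrow> 'a) set"
  assumes "finite Omega"
    and "subgroup G (BijGroup Omega)"
  shows "rc Omega G \<le> height Omega G + 1"
  unfolding rc_def
proof (rule Least_le, intro allI impI)
  fix n I J
  assume I: "length I = n \<and> length J = n \<and> set I \<subseteq> Omega \<and> set J \<subseteq> Omega"
    and "rel_equiv G (height Omega G + 1) I J"
  obtain B where "B \<subseteq> set I" "independent Omega G B" "pw_stab G B = pw_stab G (set I)"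
    using ex_independent_subset_same_pw_stab[of "set I" Omega G] I by auto
  moreover have "card B < height Omega G + 1"
    using independent_card_le_height[OF assms(1) \<open>independent Omega G B\<close>] by simp
  ultimately obtain h where "h \<in> G" "\<forall>k<length I. h (I ! k) = J ! k"
    using maps_tuple_if_rel_equiv_over_stab_base[OF assms(2)] I
      \<open>rel_equiv G (height Omega G + 1) I J\<close> by blast
  then show "rel_equiv G n I J" by (rule rel_equiv_if_maps_tuple)
qed

end
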